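(* Let $j\geq1$ be an integer and $0<e<1$. Let $n$ be a positive integer with $h_j(n)>n^{-e}$. Then for every prime $p$ and integer $m\geq1$ with $p^m\parallel n$ we have $h_j(p^m)\geq \frac{1}{M_{j,e}\,(p^m)^e}$. In particular, the set $\{n\in\mathbb{N}: h_j(n)>n^{-e}\}$ is finite.
   Context: $\sigma(n)=\sum_{d\mid n}d$. For an integer $j\geq1$, a prime $p$ and $m\geq1$, put $h_j(p^m)=\sum_{k=1}^{j}\binom{j}{k}\big(p\,\sigma(p^{m-1})\big)^{-k}$, set $h_j(1)=1$, and extend $h_j$ to all positive integers multiplicatively: $h_j(n)=\prod_{p^m\parallel n}h_j(p^m)$. For $0<e<1$ let $M_{j,e}=\max_{n\in\mathbb{Z}_{\geq1}}h_j(n)\,n^{e}$ (this maximum exists and satisfies $M_{j,e}\geq1$). *)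

theory Defs
  imports "HOL-Analysis.Analysis" "HOL-Computational_Algebra.Primes"
begin

definition sigma :: "nat \<Rightarrow> nat" where
  "sigma n = (\<Sum>d | d dvd n. d)"

text \<open>h_j at a prime power p^m, m >= 1\<close>
definition hpp :: "nat \<Rightarrow> nat \<Rightarrow> nat \<Rightarrow> real" where
  "hpp j p m = (\<Sum>k=1..j. real (j choose k) * (real p * real (sigma (p ^ (m - 1)))) powi (- int k))"

definition h :: "nat \<Rightarrow> nat \<Rightarrow> real" where
  "h j n = (\<Prod>p\<in>prime_factors n. hpp j p (multiplicity p n))"

definition M :: "nat \<Rightarrow> real \<Rightarrow> real" where
  "M j e = (SUP n\<in>{1::nat..}. h j n * real n powr e)"

definition exactly_divides :: "nat \<Rightarrow> nat \<Rightarrow> nat \<Rightarrow> bool" where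
  "exactly_divides p m n \<longleftrightarrow> p ^ m dvd n \<and> \<not> p ^ (Suc m) dvd n"

end

theory Submission
  imports Defs
begin

text \<open>
  Put F(n) = h_j(n) n^e. Its local factors h_j(p^m) (p^m)^e are at most 2^j (p^m)^(e-1), hence
  at most 2^j, and at most 1 once p is large; so F is bounded and M_{j,e} is finite. If
  h_j(n) > n^(-e) then F(n) > 1, and splitting off the exact prime power p^m of n gives
  1 < F(n) <= h_j(p^m) (p^m)^e M_{j,e}. For finiteness, bound h_j(n) n^e' for some e' in (e,1):
  on the set in question n^(e'-e) < h_j(n) n^e', so n is bounded.
\<close>

lemma le_sigma: "0 < n \<Longrightarrow> n \<le> sigma n"
  unfolding sigma_def by (rule member_le_sum) auto

lemma hpp_nonneg: "0 \<le> hpp j p m"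
  unfolding hpp_def by (intro sum_nonneg mult_nonneg_nonneg) (auto simp: power_int_minus)

lemma hpp_le_two_pow_div:
  assumes "0 < p" "1 \<le> m"
  shows "hpp j p m \<le> 2 ^ j / real (p ^ m)"
proof -
  define y where "y = real p * real (sigma (p ^ (m - 1)))"
  have pm_ge_1: "1 \<le> real (p ^ m)"
    using assms(1) by (simp add: Suc_leI)
  have "real (p ^ m) = real p * real (p ^ (m - 1))"
    using assms(2) by (metis Suc_diff_le diff_Suc_1 of_nat_mult power_Suc)
  also have "\<dots> \<le> y"
    unfolding y_def using le_sigma[of "p ^ (m - 1)"] assms(1) by (intro mult_left_mono) auto
  finally have pm_le_y: "real (p ^ m) \<le> y" .
  with pm_ge_1 have y_ge_1: "1 \<le> y" by simp
  have "hpp j p m = (\<Sum>k=1..j. real (j choose k) / y ^ k)"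
    unfolding hpp_def y_def by (intro sum.cong) (auto simp: power_int_minus divide_inverse)
  also have "\<dots> \<le> (\<Sum>k=1..j. real (j choose k) / y)"
  proof (intro sum_mono divide_left_mono)
    fix k assume "k \<in> {1..j}"
    then show "y \<le> y ^ k"
      using y_ge_1 by (metis atLeastAtMost_iff power_one_right power_increasing)
  qed (use y_ge_1 in auto)
  also have "\<dots> = (\<Sum>k=1..j. real (j choose k)) / y"
    by (simp add: sum_divide_distrib)
  also have "\<dots> \<le> (\<Sum>k\<le>j. real (j choose k)) / y"
    using y_ge_1 by (intro divide_right_mono sum_mono2) auto
  also have "\<dots> = 2 ^ j / y"
    using choose_row_sum[of j] by (metis of_nat_numeral of_nat_power of_nat_sum)
  also have "\<dots> \<le> 2 ^ j / real (p ^ m)"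
    using assms(1) pm_le_y y_ge_1 by (intro divide_left_mono mult_pos_pos) auto
  finally show ?thesis .
qed

lemma hpp_powr_le:
  assumes "0 < p" "1 \<le> m"
  shows "hpp j p m * real (p ^ m) powr e \<le> 2 ^ j * real (p ^ m) powr (e - 1)"
proof -
  have q_pos: "0 < real (p ^ m)"
    using assms(1) by simp
  have "hpp j p m * real (p ^ m) powr e \<le> 2 ^ j / real (p ^ m) * real (p ^ m) powr e"
    using hpp_le_two_pow_div[OF assms] by (intro mult_right_mono) auto
  also have "\<dots> = 2 ^ j * real (p ^ m) powr (e - 1)"
    using q_pos by (simp add: powr_diff)
  finally show ?thesis .
qed

lemma hpp_powr_le_two_pow:
  assumes "0 < p" "1 \<le> m" "e \<le> 1"
  shows "hpp j p m * real (p ^ m) powr e \<le> 2 ^ j"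
proof -
  have "1 \<le> real (p ^ m)"
    using assms(1) by (simp add: Suc_leI)
  then have "real (p ^ m) powr (e - 1) \<le> 1"
    using assms(3) powr_mono[of "e - 1" 0] by simp
  then show ?thesis
    using hpp_powr_le[OF assms(1,2), of j e] by (smt (verit) mult_left_le zero_le_power)
qed

lemma hpp_powr_le_one:
  assumes "0 < p" "1 \<le> m" "e < 1" and large: "2 powr (real j / (1 - e)) \<le> real p"
  shows "hpp j p m * real (p ^ m) powr e \<le> 1"
proof -
  define q where "q = real (p ^ m)"
  have "0 < q"
    unfolding q_def using assms(1) by simp
  have "(2::real) ^ j = (2 powr (real j / (1 - e))) powr (1 - e)"
    using assms(3) by (simp add: powr_powr powr_realpow)
  also have "\<dots> \<le> real p powr (1 - e)"
    using large assms(3) by (intro powr_mono2) auto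
  also have "\<dots> \<le> q powr (1 - e)"
    unfolding q_def using assms(1-3) by (intro powr_mono2) (auto simp: self_le_power)
  finally have "2 ^ j * q powr (e - 1) \<le> q powr (1 - e) * q powr (e - 1)"
    by (intro mult_right_mono) auto
  also have "\<dots> = 1"
    using \<open>0 < q\<close> by (simp add: powr_add[symmetric])
  finally show ?thesis
    using hpp_powr_le[OF assms(1,2), of j e] unfolding q_def by linarith
qed

lemma h_one [simp]: "h j 1 = 1"
  unfolding h_def by simp

lemma h_prime_power:
  assumes "prime p" "1 \<le> m"
  shows "h j (p ^ m) = hpp j p m"
  using assms by (simp add: h_def prime_factorization_prime_power)

lemma h_mult_coprime:
  assumes "coprime a b" "0 < a" "0 < b"
  shows "h j (a * b) = h j a * h j b"
proof -
  have disjoint: "prime_factors a \<inter> prime_factors b = {}"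
  proof (rule ccontr)
    assume "prime_factors a \<inter> prime_factors b \<noteq> {}"
    then obtain p where "prime p" "p dvd a" "p dvd b"
      by (auto simp: in_prime_factors_iff)
    with assms(1) show False
      using coprime_common_divisor not_prime_unit by blast
  qed
  have mult_a: "multiplicity p (a * b) = multiplicity p a" if "p \<in> prime_factors a" for p
  proof -
    have "p \<notin> prime_factors b" using that disjoint by blast
    then have "multiplicity p b = 0"
      using assms(3) that by (intro not_dvd_imp_multiplicity_0) (auto simp: in_prime_factors_iff)
    then show ?thesis
      using that assms(2,3) by (simp add: prime_elem_multiplicity_mult_distrib in_prime_factors_iff)
  qed
  have mult_b: "multiplicity p (a * b) = multiplicity p b" if "p \<in> prime_factors b" for p
  proof -
    have "p \<notin> prime_factors a" using that disjoint by blast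
    then have "multiplicity p a = 0"
      using assms(2) that by (intro not_dvd_imp_multiplicity_0) (auto simp: in_prime_factors_iff)
    then show ?thesis
      using that assms(2,3) by (simp add: prime_elem_multiplicity_mult_distrib in_prime_factors_iff)
  qed
  show ?thesis
    unfolding h_def using assms(2,3) disjoint
    by (simp add: prime_factors_product prod.union_disjoint mult_a mult_b cong: prod.cong)
qed

lemma h_powr_eq_prod:
  assumes "0 < n"
  shows "h j n * real n powr e =
    (\<Prod>p\<in>prime_factors n. hpp j p (multiplicity p n) * real (p ^ multiplicity p n) powr e)"
proof -
  have "real n powr e = (\<Prod>p\<in>prime_factors n. real (p ^ multiplicity p n)) powr e"
    by (subst prime_factorization_nat[OF assms]) simp
  also have "\<dots> = (\<Prod>p\<in>prime_factors n. real (p ^ multiplicity p n) powr e)"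
    by (rule prod_powr_distrib)
  finally show ?thesis
    unfolding h_def by (simp add: prod.distrib)
qed

lemma h_powr_bounded:
  assumes "0 \<le> e" "e < 1"
  shows "\<exists>B. \<forall>n>0. h j n * real n powr e \<le> B"
proof -
  define K where "K = nat \<lceil>2 powr (real j / (1 - e))\<rceil>"
  define g where "g p = (if p < K then (2::real) ^ j else 1)" for p :: nat
  have local_le_g: "hpp j p m * real (p ^ m) powr e \<le> g p" if "prime p" "1 \<le> m" for p m
  proof -
    have "0 < p"
      using that(1) prime_gt_0_nat by blast
    show ?thesis
    proof (cases "p < K")
      case True
      then show ?thesis
        unfolding g_def using hpp_powr_le_two_pow \<open>0 < p\<close> that(2) assms(2) by simp
    next
      case False
      then have "2 powr (real j / (1 - e)) \<le> real p"
        unfolding K_def by linarith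
      then show ?thesis
        unfolding g_def using hpp_powr_le_one \<open>0 < p\<close> that(2) assms(2) False by simp
    qed
  qed
  have "h j n * real n powr e \<le> (2 ^ j) ^ K" if "0 < n" for n
  proof -
    have "h j n * real n powr e \<le> (\<Prod>p\<in>prime_factors n. g p)"
      unfolding h_powr_eq_prod[OF that]
    proof (intro prod_mono conjI)
      fix p assume "p \<in> prime_factors n"
      then show "hpp j p (multiplicity p n) * real (p ^ multiplicity p n) powr e \<le> g p"
        using that by (intro local_le_g) (auto simp: prime_factors_multiplicity)
    qed (simp add: hpp_nonneg)
    also have "\<dots> = (\<Prod>p\<in>prime_factors n \<inter> {..<K}. g p) * (\<Prod>p\<in>prime_factors n - {..<K}. g p)"
      by (rule prod.Int_Diff) simp
    also have "\<dots> = (2 ^ j) ^ card (prime_factors n \<inter> {..<K})"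
      unfolding g_def by (simp add: prod.neutral)
    also have "\<dots> \<le> (2 ^ j) ^ K"
      by (intro power_increasing order.trans[OF card_mono card_lessThan[THEN eq_imp_le]]) auto
    finally show ?thesis .
  qed
  then show ?thesis by blast
qed

lemma h_powr_le_M:
  assumes "0 \<le> e" "e < 1" "0 < n"
  shows "h j n * real n powr e \<le> M j e"
proof -
  obtain B where "\<forall>n>0. h j n * real n powr e \<le> B"
    using h_powr_bounded[OF assms(1,2)] by blast
  then have "bdd_above ((\<lambda>n. h j n * real n powr e) ` {1..})"
    by (intro bdd_aboveI2[where M = B]) auto
  then show ?thesis
    unfolding M_def using assms(3) by (intro cSUP_upper) auto
qed

lemma one_le_M: "0 \<le> e \<Longrightarrow> e < 1 \<Longrightarrow> 1 \<le> M j e"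
  using h_powr_le_M[of e 1 j] unfolding h_one by simp

lemma h_powr_split_prime_power:
  assumes "prime p" "1 \<le> m" "exactly_divides p m n" "0 < n"
  obtains r where "0 < r"
    and "h j n * real n powr e = hpp j p m * real (p ^ m) powr e * (h j r * real r powr e)"
proof
  define r where "r = n div p ^ m"
  have n_eq: "n = p ^ m * r"
    using assms(3) unfolding r_def exactly_divides_def by simp
  then show r_pos: "0 < r"
    using assms(4) by (cases "r = 0") auto
  have "\<not> p dvd r"
    using assms(3) n_eq unfolding exactly_divides_def by (auto simp: mult.assoc)
  then have "coprime (p ^ m) r"
    using assms(1) by (simp add: prime_imp_coprime)
  then have "h j n = hpp j p m * h j r"
    using assms(1,2) r_pos n_eq by (simp add: h_mult_coprime prime_gt_0_nat h_prime_power)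
  moreover have "real n powr e = real (p ^ m) powr e * real r powr e"
    using n_eq by (simp add: powr_mult)
  ultimately show "h j n * real n powr e = hpp j p m * real (p ^ m) powr e * (h j r * real r powr e)"
    by (simp add: ac_simps)
qed

lemma hpp_lower_bound:
  assumes "0 \<le> e" "e < 1" "0 < n" "1 < h j n * real n powr e"
    and "prime p" "1 \<le> m" "exactly_divides p m n"
  shows "1 / (M j e * real (p ^ m) powr e) \<le> hpp j p m"
proof -
  obtain r where "0 < r"
    and split: "h j n * real n powr e = hpp j p m * real (p ^ m) powr e * (h j r * real r powr e)"
    using h_powr_split_prime_power[OF assms(5-7,3)] .
  have "1 < hpp j p m * real (p ^ m) powr e * (h j r * real r powr e)"
    using assms(4) split by simp
  also have "\<dots> \<le> hpp j p m * real (p ^ m) powr e * M j e"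
    using h_powr_le_M[OF assms(1,2) \<open>0 < r\<close>] by (intro mult_left_mono) (auto simp: hpp_nonneg)
  finally have "1 < hpp j p m * (M j e * real (p ^ m) powr e)"
    by (simp add: ac_simps)
  moreover have "0 < M j e * real (p ^ m) powr e"
    using one_le_M[OF assms(1,2), of j] prime_gt_0_nat[OF assms(5)] by (intro mult_pos_pos) auto
  ultimately show ?thesis
    by (simp add: divide_le_eq)
qed

lemma finite_h_gt_powr:
  assumes "0 \<le> e" "e < 1"
  shows "finite {n. 1 \<le> n \<and> real n powr (- e) < h j n}"
proof -
  define e' where "e' = (1 + e) / 2"
  have "0 < e' - e" "0 \<le> e'" "e' < 1"
    unfolding e'_def using assms by auto
  then obtain B where B: "\<forall>n>0. h j n * real n powr e' \<le> B"
    using h_powr_bounded by blast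
  have bound: "real n \<le> B powr (1 / (e' - e))" if "1 \<le> n" "real n powr (- e) < h j n" for n
  proof -
    have "real n powr (e' - e) = real n powr (- e) * real n powr e'"
      using that(1) by (simp add: powr_add[symmetric])
    also have "\<dots> \<le> h j n * real n powr e'"
      using that by (intro mult_right_mono) auto
    also have "\<dots> \<le> B"
      using B that(1) by simp
    finally have "real n powr (e' - e) \<le> B" .
    then have "(real n powr (e' - e)) powr (1 / (e' - e)) \<le> B powr (1 / (e' - e))"
      using \<open>0 < e' - e\<close> by (intro powr_mono2) auto
    then show ?thesis
      using \<open>0 < e' - e\<close> by (simp add: powr_powr)
  qed
  have "{n. 1 \<le> n \<and> real n powr (- e) < h j n} \<subseteq> {..nat \<lceil>B powr (1 / (e' - e))\<rceil>}"
  proof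
    fix n assume "n \<in> {n. 1 \<le> n \<and> real n powr (- e) < h j n}"
    then have "real n \<le> B powr (1 / (e' - e))"
      using bound by blast
    then show "n \<in> {..nat \<lceil>B powr (1 / (e' - e))\<rceil>}"
      by simp linarith
  qed
  then show ?thesis
    by (rule finite_subset) simp
qed

theorem lemma5p2:
  fixes j n :: nat and e :: real
  assumes "j \<ge> 1" and "0 < e" and "e < 1"
    and "n \<ge> 1" and "h j n > real n powr (- e)"
  shows "(\<forall>p m. prime p \<and> m \<ge> 1 \<and> exactly_divides p m n \<longrightarrow>
            hpp j p m \<ge> 1 / (M j e * real (p ^ m) powr e))
         \<and> finite {n::nat. n \<ge> 1 \<and> h j n > real n powr (- e)}"
proof
  have "1 = real n powr (- e) * real n powr e"
    using assms(4) by (simp add: powr_add[symmetric])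
  also have "\<dots> < h j n * real n powr e"
    using assms(4,5) by (intro mult_strict_right_mono) auto
  finally have F_gt_1: "1 < h j n * real n powr e" .
  have "0 \<le> e" "0 < n"
    using assms(2,4) by auto
  then show "\<forall>p m. prime p \<and> m \<ge> 1 \<and> exactly_divides p m n \<longrightarrow>
            hpp j p m \<ge> 1 / (M j e * real (p ^ m) powr e)"
    using hpp_lower_bound assms(3) F_gt_1 by blast
  show "finite {n::nat. n \<ge> 1 \<and> h j n > real n powr (- e)}"
    using finite_h_gt_powr assms(2,3) by simp
qed

end
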